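(* Let $P$ be a Horn labelled program that is consistent (i.e. has at least one classical model). Then $P$ has a unique justified model, and it coincides with the least classical model of $P$.
   Context: Fix a finite non-empty set $\mathit{At}$ of propositional atoms. A labelled rule $r$ has the form $\ell : p_1 \vee \dots \vee p_m \leftarrow q_1 \wedge \dots \wedge q_n \wedge \neg s_1 \wedge \dots \wedge \neg s_j \wedge \neg\neg t_1 \wedge \dots \wedge \neg\neg t_k$ with $m,n,j,k \ge 0$ and atoms in $\mathit{At}$; $\mathit{Lb}(r)=\ell$, $\mathit{Hd}(r)=p_1\vee\dots\vee p_m$, $H(r)=\{p_1,\dots,p_m\}$, $\mathit{Bd}(r)$ is the whole antecedent, $\mathit{Bd}^+(r)=q_1\wedge\dots\wedge q_n$, $B^+(r)=\{q_1,\dots,q_n\}$, $\mathit{Bd}^-(r)=\neg s_1 \wedge \dots \wedge \neg s_j \wedge \neg\neg t_1 \wedge \dots \wedge \neg\neg t_k$. Empty disjunction is $\bot$, empty conjunction $\top$. A labelled program $P$ is a finite set of labelled rules with no repeated label; $\mathit{Lb}(P)$ is its set of labels. $P$ is Horn if $\mathit{Bd}^-(r)=\top$ and $|H(r)|\le 1$ for all $r\in P$ (so constraints $\bot\leftarrow q_1\wedge\dots\wedge q_n$ are allowed). An interpretation $I\subseteq\mathit{At}$ is a (classical) model of $P$ if $I\models \mathit{Bd}(r)\to\mathit{Hd}(r)$ for every $r\in P$. $\mathit{Sup}(I,P,p)=\{ r \in P \mid p \in H(r),\ I \models \mathit{Bd}(r)\}$. A support graph of a model $I$ under $P$ is a directed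 graph $G=\langle I,E,\lambda\rangle$ with vertex set $I$, edges $E\subseteq I\times I$ and a labelling $\lambda: I\to \mathit{Lb}(P)$ such that (i) $\lambda$ is injective, and (ii) for every $p\in I$, the rule $r\in P$ with $\mathit{Lb}(r)=\lambda(p)$ satisfies $r\in \mathit{Sup}(I,P,p)$ and $B^+(r)=\{q \mid (q,p)\in E\}$. An explanation is an acyclic support graph. A classical model $I$ of $P$ is a justified model if some explanation of $I$ under $P$ exists. *)

theory Defs
  imports Main
begin

text \<open>A labelled rule  l : p1 v ... v pm <- q1,...,qn, not s1,...,not sj, not not t1,...,not not tk.
  Atoms have type 'a, labels type 'l.\<close>
record ('a, 'l) lrule =
  Lb  :: 'l
  H   :: "'a set"
  Bp  :: "'a set"
  Bn  :: "'a set"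
  Bnn :: "'a set"

definition rule_over :: "'a set \<Rightarrow> ('a, 'l) lrule \<Rightarrow> bool" where
  "rule_over At r \<longleftrightarrow> finite (H r) \<and> finite (Bp r) \<and> finite (Bn r) \<and> finite (Bnn r) \<and>
     H r \<subseteq> At \<and> Bp r \<subseteq> At \<and> Bn r \<subseteq> At \<and> Bnn r \<subseteq> At"

definition labelled_program :: "'a set \<Rightarrow> ('a, 'l) lrule set \<Rightarrow> bool" where
  "labelled_program At P \<longleftrightarrow> finite P \<and> (\<forall>r\<in>P. rule_over At r) \<and> inj_on Lb P"

definition Lbs :: "('a, 'l) lrule set \<Rightarrow> 'l set" where
  "Lbs P = Lb ` P"

definition horn :: "('a, 'l) lrule set \<Rightarrow> bool" where
  "horn P \<longleftrightarrow> (\<forall>r\<in>P. Bn r = {} \<and> Bnn r = {} \<and> card (H r) \<le> 1)"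

text \<open>I |= Bd(r):  all q_i true, all s_i false, all t_i true (not not t = t classically).\<close>
definition sat_body :: "'a set \<Rightarrow> ('a, 'l) lrule \<Rightarrow> bool" where
  "sat_body I r \<longleftrightarrow> Bp r \<subseteq> I \<and> Bn r \<inter> I = {} \<and> Bnn r \<subseteq> I"

definition sat_head :: "'a set \<Rightarrow> ('a, 'l) lrule \<Rightarrow> bool" where
  "sat_head I r \<longleftrightarrow> H r \<inter> I \<noteq> {}"

definition is_model :: "'a set \<Rightarrow> ('a, 'l) lrule set \<Rightarrow> 'a set \<Rightarrow> bool" where
  "is_model At P I \<longleftrightarrow> I \<subseteq> At \<and> (\<forall>r\<in>P. sat_body I r \<longrightarrow> sat_head I r)"

definition consistent :: "'a set \<Rightarrow> ('a, 'l) lrule set \<Rightarrow> bool" where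
  "consistent At P \<longleftrightarrow> (\<exists>I. is_model At P I)"

definition least_model :: "'a set \<Rightarrow> ('a, 'l) lrule set \<Rightarrow> 'a set \<Rightarrow> bool" where
  "least_model At P I \<longleftrightarrow> is_model At P I \<and> (\<forall>J. is_model At P J \<longrightarrow> I \<subseteq> J)"

definition Sup :: "'a set \<Rightarrow> ('a, 'l) lrule set \<Rightarrow> 'a \<Rightarrow> ('a, 'l) lrule set" where
  "Sup I P p = {r \<in> P. p \<in> H r \<and> sat_body I r}"

definition support_graph ::
  "('a, 'l) lrule set \<Rightarrow> 'a set \<Rightarrow> ('a \<times> 'a) set \<Rightarrow> ('a \<Rightarrow> 'l) \<Rightarrow> bool" where
  "support_graph P I E lam \<longleftrightarrow>
     E \<subseteq> I \<times> I \<and> lam ` I \<subseteq> Lbs P \<and> inj_on lam I \<and>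
     (\<forall>p\<in>I. \<forall>r\<in>P. Lb r = lam p \<longrightarrow> r \<in> Sup I P p \<and> Bp r = {q. (q, p) \<in> E})"

definition explanation ::
  "('a, 'l) lrule set \<Rightarrow> 'a set \<Rightarrow> ('a \<times> 'a) set \<Rightarrow> ('a \<Rightarrow> 'l) \<Rightarrow> bool" where
  "explanation P I E lam \<longleftrightarrow> support_graph P I E lam \<and> acyclic E"

definition justified_model :: "'a set \<Rightarrow> ('a, 'l) lrule set \<Rightarrow> 'a set \<Rightarrow> bool" where
  "justified_model At P I \<longleftrightarrow> is_model At P I \<and> (\<exists>E lam. explanation P I E lam)"

end

theory Submission
  imports Defs
begin

text \<open>Every rule of a Horn program is a definite clause or a constraint. Iterating the definite
  clauses from the empty set gives levels whose union lies in every model; since some model exists,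
  no constraint fires on it, so this union is the least model. Choosing for each atom a rule that
  derives it at its first level yields a support graph whose edges strictly decrease the level,
  hence an explanation. Conversely, well-founded induction along the edges of any explanation
  shows that a justified model is contained in every model, so it is the least one.\<close>

primrec level :: "('a, 'l) lrule set \<Rightarrow> nat \<Rightarrow> 'a set" where
  "level P 0 = {}"
| "level P (Suc n) = {p. \<exists>r\<in>P. H r = {p} \<and> Bp r \<subseteq> level P n}"

definition derived :: "('a, 'l) lrule set \<Rightarrow> 'a set" where
  "derived P = (\<Union>n. level P n)"

lemma horn_head_singleton:
  assumes "labelled_program At P" "horn P" "r \<in> P" "p \<in> H r"
  shows "H r = {p}"
proof -
  have "finite (H r)" "card (H r) \<le> Suc 0"
    using assms unfolding labelled_program_def rule_over_def horn_def by auto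
  then show ?thesis using assms(4) card_le_Suc0_iff_eq by blast
qed

lemma horn_sat_body_iff: "horn P \<Longrightarrow> r \<in> P \<Longrightarrow> sat_body I r \<longleftrightarrow> Bp r \<subseteq> I"
  unfolding horn_def sat_body_def by auto

lemma level_mono: "m \<le> n \<Longrightarrow> level P m \<subseteq> level P n"
proof (rule lift_Suc_mono_le)
  show "level P k \<subseteq> level P (Suc k)" for k
    by (induction k) (simp, simp only: level.simps, blast)
qed

lemma finite_subset_level:
  assumes "finite B" "B \<subseteq> derived P"
  shows "\<exists>n. B \<subseteq> level P n"
  using assms
proof (induction B rule: finite_induct)
  case empty then show ?case by auto
next
  case (insert x F)
  then obtain n m where "F \<subseteq> level P n" "x \<in> level P m"
    unfolding derived_def by auto
  then have "insert x F \<subseteq> level P (max n m)"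
    using level_mono[of n "max n m" P] level_mono[of m "max n m" P] by auto
  then show ?case by blast
qed

lemma derived_subset_model:
  assumes "horn P" "is_model At P J"
  shows "derived P \<subseteq> J"
proof -
  have "level P n \<subseteq> J" for n
  proof (induction n)
    case 0 then show ?case by simp
  next
    case (Suc n)
    show ?case
    proof
      fix p assume "p \<in> level P (Suc n)"
      then obtain r where r: "r \<in> P" "H r = {p}" "Bp r \<subseteq> level P n" by auto
      then have "sat_body J r" using Suc horn_sat_body_iff[OF assms(1)] by auto
      with assms(2) r show "p \<in> J" unfolding is_model_def sat_head_def by auto
    qed
  qed
  then show ?thesis unfolding derived_def by auto
qed

lemma derived_is_model:
  assumes "labelled_program At P" "horn P" "is_model At P J"
  shows "is_model At P (derived P)"
  unfolding is_model_def
proof (intro conjI ballI impI)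
  show "derived P \<subseteq> At"
    using derived_subset_model[OF assms(2,3)] assms(3) unfolding is_model_def by auto
next
  fix r assume r: "r \<in> P" "sat_body (derived P) r"
  show "sat_head (derived P) r"
  proof (cases "H r = {}")
    case True
    \<comment> \<open>consistency is needed here: the body of the constraint would also hold in \<open>J \<supseteq> derived P\<close>\<close>
    have "sat_body J r"
      using r derived_subset_model[OF assms(2,3)] horn_sat_body_iff[OF assms(2)] by blast
    with assms(3) r(1) True show ?thesis unfolding is_model_def sat_head_def by auto
  next
    case False
    then obtain p where p: "H r = {p}"
      using horn_head_singleton[OF assms(1,2) r(1)] by blast
    have "finite (Bp r)"
      using assms(1) r(1) unfolding labelled_program_def rule_over_def by auto
    then obtain n where "Bp r \<subseteq> level P n"
      using finite_subset_level r(2) horn_sat_body_iff[OF assms(2) r(1)] by blast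
    with r(1) p have "p \<in> level P (Suc n)" by auto
    with p show ?thesis unfolding derived_def sat_head_def by blast
  qed
qed

lemma support_graph_of_rule_choice:
  assumes "inj_on Lb P"
    and "\<And>p. p \<in> I \<Longrightarrow> rl p \<in> P \<and> H (rl p) = {p} \<and> Bp (rl p) \<subseteq> I"
    and "horn P"
  shows "support_graph P I {(q, p). p \<in> I \<and> q \<in> Bp (rl p)} (Lb \<circ> rl)"
  unfolding support_graph_def
proof (intro conjI ballI allI impI)
  show "{(q, p). p \<in> I \<and> q \<in> Bp (rl p)} \<subseteq> I \<times> I"
    using assms(2) by blast
  show "(Lb \<circ> rl) ` I \<subseteq> Lbs P"
    using assms(2) unfolding Lbs_def by auto
  show "inj_on (Lb \<circ> rl) I"
  proof (rule inj_onI)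
    fix p p' assume "p \<in> I" "p' \<in> I" "(Lb \<circ> rl) p = (Lb \<circ> rl) p'"
    with assms(1,2) have "rl p = rl p'" by (simp add: inj_on_eq_iff)
    with assms(2) \<open>p \<in> I\<close> \<open>p' \<in> I\<close> show "p = p'" by (metis singleton_inject)
  qed
next
  fix p r assume p: "p \<in> I" and r: "r \<in> P" "Lb r = (Lb \<circ> rl) p"
  with assms(1,2) have "r = rl p" by (simp add: inj_on_eq_iff)
  with assms(2,3) p show "r \<in> Sup I P p"
    unfolding Sup_def by (auto simp: horn_sat_body_iff)
  show "Bp r = {q. (q, p) \<in> {(q, p). p \<in> I \<and> q \<in> Bp (rl p)}}"
    using \<open>r = rl p\<close> p by auto
qed

lemma derived_has_explanation:
  assumes "labelled_program At P" "horn P"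
  shows "\<exists>E lam. explanation P (derived P) E lam"
proof -
  define rank where "rank p = (LEAST n. p \<in> level P n)" for p
  have rank_level: "p \<in> level P (rank p)" if "p \<in> derived P" for p
    using that unfolding derived_def rank_def by (auto intro: LeastI)
  have rank_le: "rank q \<le> n" if "q \<in> level P n" for q n
    using that unfolding rank_def by (rule Least_le)
  define rl where "rl p = (SOME r. r \<in> P \<and> H r = {p} \<and> Bp r \<subseteq> level P (rank p - 1))" for p
  have rl: "rl p \<in> P \<and> H (rl p) = {p} \<and> Bp (rl p) \<subseteq> level P (rank p - 1) \<and> 0 < rank p"
    if p: "p \<in> derived P" for p
  proof -
    obtain k where k: "rank p = Suc k"
      using rank_level[OF p] by (cases "rank p") auto
    then have "\<exists>r. r \<in> P \<and> H r = {p} \<and> Bp r \<subseteq> level P (rank p - 1)"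
      using rank_level[OF p] by auto
    then have "rl p \<in> P \<and> H (rl p) = {p} \<and> Bp (rl p) \<subseteq> level P (rank p - 1)"
      unfolding rl_def by (rule someI_ex)
    with k show ?thesis by simp
  qed
  have rl_derived: "rl p \<in> P \<and> H (rl p) = {p} \<and> Bp (rl p) \<subseteq> derived P"
    if "p \<in> derived P" for p
    using rl[OF that] unfolding derived_def by blast
  define E where "E = {(q, p). p \<in> derived P \<and> q \<in> Bp (rl p)}"
  have "E \<subseteq> inv_image less_than rank"
    using rl rank_le unfolding E_def by fastforce
  then have "acyclic E"
    using wf_subset[OF wf_inv_image[OF wf_less_than]] wf_acyclic by blast
  moreover have "support_graph P (derived P) E (Lb \<circ> rl)"
    unfolding E_def
    using support_graph_of_rule_choice[OF _ rl_derived assms(2)] assms(1)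
    unfolding labelled_program_def by blast
  ultimately show ?thesis unfolding explanation_def by blast
qed

lemma explanation_subset_model:
  assumes "labelled_program At P" "horn P" "finite I"
    and "explanation P I E lam" "is_model At P M"
  shows "I \<subseteq> M"
proof -
  have sg: "support_graph P I E lam" and "acyclic E"
    using assms(4) unfolding explanation_def by auto
  moreover have "finite E"
    using sg assms(3) finite_subset[of E "I \<times> I"] unfolding support_graph_def by blast
  ultimately have "wf E" by (simp add: finite_acyclic_wf)
  have "p \<in> I \<longrightarrow> p \<in> M" for p
  proof (induction p rule: wf_induct[OF \<open>wf E\<close>])
    case (1 p)
    show ?case
    proof
      assume p: "p \<in> I"
      then have "lam p \<in> Lb ` P"
        using sg unfolding support_graph_def Lbs_def by blast
      then obtain r where r: "r \<in> P" "Lb r = lam p" by force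
      then have "p \<in> H r" "Bp r = {q. (q, p) \<in> E}"
        using sg p unfolding support_graph_def Sup_def by auto
      moreover have "{q. (q, p) \<in> E} \<subseteq> M"
        using 1 sg unfolding support_graph_def by blast
      ultimately have "sat_head M r"
        using assms(5) r(1) horn_sat_body_iff[OF assms(2)] unfolding is_model_def by auto
      then show "p \<in> M"
        using horn_head_singleton[OF assms(1,2) r(1) \<open>p \<in> H r\<close>] unfolding sat_head_def by auto
    qed
  qed
  then show ?thesis by blast
qed

theorem proposition4:
  fixes At :: "'a set" and P :: "('a, 'l) lrule set"
  assumes "finite At" and "At \<noteq> {}"
    and "labelled_program At P"
    and "horn P"
    and "consistent At P"
  shows "\<exists>I. least_model At P I \<and> (\<forall>J. justified_model At P J \<longleftrightarrow> J = I)"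
proof (intro exI conjI allI)
  obtain J0 where "is_model At P J0"
    using assms(5) unfolding consistent_def by blast
  then have model: "is_model At P (derived P)"
    using derived_is_model assms(3,4) by blast
  then show least: "least_model At P (derived P)"
    unfolding least_model_def using derived_subset_model[OF assms(4)] by blast
  fix J
  show "justified_model At P J \<longleftrightarrow> J = derived P"
  proof
    assume J: "justified_model At P J"
    then have "finite J"
      using assms(1) finite_subset unfolding justified_model_def is_model_def by blast
    with J have "J \<subseteq> derived P"
      using explanation_subset_model[OF assms(3,4)] model unfolding justified_model_def by blast
    with J least show "J = derived P"
      unfolding justified_model_def least_model_def by blast
  qed (use model derived_has_explanation[OF assms(3,4)] in \<open>auto simp: justified_model_def\<close>)
qed

end
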